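(* Let $S\ni h$ be a polarized lattice, $\Delta$ a Weyl chamber for $\operatorname{rt}(S,h)$, $e_1,e_2\in\mathfrak{b}(\Delta)$ distinct exceptional divisors, and $l_1,l_2\in\operatorname{Fn}_\Delta(S,h)$ distinct lines. Then: (1) if $S\ni h$ is $2$-admissible, then $l_1\cdot l_2\in\{0,1\}$; (2) if $S\ni h$ is $1$-admissible, then $l_1\cdot e_1\in\{0,1\}$; (3) always $e_1\cdot e_2\in\{0,1\}$.
   Context: All lattices even; $(S,h)$ polarized means $S$ hyperbolic, $h^2>0$. $\operatorname{root}_n(S,h)=\{r: r^2=-2,\ r\cdot h=n\}$; $\operatorname{rt}(S,h)$ is spanned by $\operatorname{root}_0(S,h)$. A Weyl chamber $\Delta$ has positive roots $P_\Delta$ and simple roots $\mathfrak{b}(\Delta)$ (exceptional divisors). Lines: $\operatorname{Fn}_\Delta(S,h)=\{l\in\operatorname{root}_1(S,h): l\cdot e\ge0\ \forall e\in\mathfrak{b}(\Delta)\}$. A vector $w$ is $m$-isotropic if $w^2=0$, $w\cdot h=m$. $S\ni h$ is $1$-admissible if it has no $1$-isotropic vector, and $2$-admissible if $h^2\ge4$ and it has neither $1$- nor $2$-isotropic vectors. *)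

theory Defs
  imports "HOL-Analysis.Analysis"
begin

text \<open>A lattice of rank CARD('n) is modelled as int^'n with an integer Gram matrix G.\<close>

definition bf :: "int^'n^'n \<Rightarrow> int^'n \<Rightarrow> int^'n \<Rightarrow> int" where
  "bf G x y = (\<Sum>i\<in>UNIV. \<Sum>j\<in>UNIV. x$i * G$i$j * y$j)"

definition rbf :: "int^'n^'n \<Rightarrow> real^'n \<Rightarrow> real^'n \<Rightarrow> real" where
  "rbf G x y = (\<Sum>i\<in>UNIV. \<Sum>j\<in>UNIV. x$i * of_int (G$i$j) * y$j)"

definition to_real :: "int^'n \<Rightarrow> real^'n" where
  "to_real x = (\<chi> i. of_int (x$i))"

definition even_lattice :: "int^'n^'n \<Rightarrow> bool" where
  "even_lattice G \<longleftrightarrow> (\<forall>i j. G$i$j = G$j$i) \<and> (\<forall>i. even (G$i$i)) \<and> det G \<noteq> 0"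

text \<open>Hyperbolic: nondegenerate of signature (1, rank-1): there is a positive vector,
  but no 2-dimensional real subspace on which the form is positive definite.\<close>
definition hyperbolic :: "int^'n^'n \<Rightarrow> bool" where
  "hyperbolic G \<longleftrightarrow> det G \<noteq> 0 \<and> (\<exists>x. rbf G x x > 0) \<and>
     \<not> (\<exists>x y. \<forall>a b::real. (a \<noteq> 0 \<or> b \<noteq> 0) \<longrightarrow>
          rbf G (a *\<^sub>R x + b *\<^sub>R y) (a *\<^sub>R x + b *\<^sub>R y) > 0)"

definition polarized :: "int^'n^'n \<Rightarrow> int^'n \<Rightarrow> bool" where
  "polarized G h \<longleftrightarrow> even_lattice G \<and> hyperbolic G \<and> bf G h h > 0"

definition root :: "int^'n^'n \<Rightarrow> int^'n \<Rightarrow> int \<Rightarrow> (int^'n) set" where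
  "root G h n = {r. bf G r r = -2 \<and> bf G r h = n}"

text \<open>Weyl chamber of the root system rt(S,h) (spanned by root_0), as an open chamber in
  rt(S,h) \<otimes> R: the set of vectors of the span having prescribed nonzero signs against all roots,
  the signs coming from a generic vector.\<close>
definition weyl_chamber :: "int^'n^'n \<Rightarrow> int^'n \<Rightarrow> (real^'n) set \<Rightarrow> bool" where
  "weyl_chamber G h \<Delta> \<longleftrightarrow> (\<exists>v \<in> span (to_real ` root G h 0).
      (\<forall>r\<in>root G h 0. rbf G v (to_real r) \<noteq> 0) \<and>
      \<Delta> = {x \<in> span (to_real ` root G h 0).
              \<forall>r\<in>root G h 0. rbf G x (to_real r) * rbf G v (to_real r) > 0})"

definition pos_roots :: "int^'n^'n \<Rightarrow> int^'n \<Rightarrow> (real^'n) set \<Rightarrow> (int^'n) set" where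
  "pos_roots G h \<Delta> = {r \<in> root G h 0. \<forall>x\<in>\<Delta>. rbf G x (to_real r) > 0}"

text \<open>Simple roots (exceptional divisors): positive roots not a sum of two positive roots.\<close>
definition simple_roots :: "int^'n^'n \<Rightarrow> int^'n \<Rightarrow> (real^'n) set \<Rightarrow> (int^'n) set" where
  "simple_roots G h \<Delta> = {e \<in> pos_roots G h \<Delta>.
      \<not> (\<exists>a\<in>pos_roots G h \<Delta>. \<exists>b\<in>pos_roots G h \<Delta>. e = a + b)}"

definition lines :: "int^'n^'n \<Rightarrow> int^'n \<Rightarrow> (real^'n) set \<Rightarrow> (int^'n) set" where
  "lines G h \<Delta> = {l \<in> root G h 1. \<forall>e\<in>simple_roots G h \<Delta>. bf G l e \<ge> 0}"

definition isotropic :: "int^'n^'n \<Rightarrow> int^'n \<Rightarrow> int \<Rightarrow> int^'n \<Rightarrow> bool" where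
  "isotropic G h m w \<longleftrightarrow> bf G w w = 0 \<and> bf G w h = m"

definition admissible1 :: "int^'n^'n \<Rightarrow> int^'n \<Rightarrow> bool" where
  "admissible1 G h \<longleftrightarrow> \<not> (\<exists>w. isotropic G h 1 w)"

definition admissible2 :: "int^'n^'n \<Rightarrow> int^'n \<Rightarrow> bool" where
  "admissible2 G h \<longleftrightarrow> bf G h h \<ge> 4 \<and> \<not> (\<exists>w. isotropic G h 1 w) \<and> \<not> (\<exists>w. isotropic G h 2 w)"

end

theory Submission imports Defs begin

(* The form is negative definite on the orthogonal complement of h and satisfies the reverse
   Cauchy-Schwarz (Hodge index) inequality h^2 w^2 <= (w.h)^2.  For distinct (-2)-vectors x, y
   of the same degree, x - y is orthogonal to h, so (x - y)^2 < 0 gives x.y >= -1; and x.y = -1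
   would make x - y a root of degree 0, hence plus or minus a positive root.  This contradicts
   simplicity of exceptional divisors, and for lines it contradicts l.r >= 0 for every positive
   root r, which holds because the finitely many roots of degree 0 make every positive root a sum
   of simple ones.  Upper bounds: (e1 + e2)^2 < 0 gives e1.e2 <= 1; for w = x + y of degree
   m = 1 or 2, x.y >= 3 forces w^2 >= 2, contradicting h^2 w^2 <= m^2 < 2 h^2, and x.y = 2
   makes w m-isotropic. *)

lemma rbf_add_left [simp]: "rbf G (x + y) z = rbf G x z + rbf G y z"
  unfolding rbf_def by (simp add: sum.distrib algebra_simps)

lemma rbf_add_right [simp]: "rbf G z (x + y) = rbf G z x + rbf G z y"
  unfolding rbf_def by (simp add: sum.distrib algebra_simps)

lemma rbf_diff_left [simp]: "rbf G (x - y) z = rbf G x z - rbf G y z"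
  unfolding rbf_def by (simp add: sum_subtractf algebra_simps)

lemma rbf_diff_right [simp]: "rbf G z (x - y) = rbf G z x - rbf G z y"
  unfolding rbf_def by (simp add: sum_subtractf algebra_simps)

lemma rbf_minus_right [simp]: "rbf G z (- x) = - rbf G z x"
  unfolding rbf_def by (simp add: sum_negf)

lemma rbf_scaleR_left [simp]: "rbf G (c *\<^sub>R x) z = c * rbf G x z"
  unfolding rbf_def by (simp add: sum_distrib_left algebra_simps)

lemma rbf_scaleR_right [simp]: "rbf G z (c *\<^sub>R x) = c * rbf G z x"
  unfolding rbf_def by (simp add: sum_distrib_left algebra_simps)

lemma bf_add_left [simp]: "bf G (x + y) z = bf G x z + bf G y z"
  unfolding bf_def by (simp add: sum.distrib algebra_simps)

lemma bf_add_right [simp]: "bf G z (x + y) = bf G z x + bf G z y"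
  unfolding bf_def by (simp add: sum.distrib algebra_simps)

lemma bf_diff_left [simp]: "bf G (x - y) z = bf G x z - bf G y z"
  unfolding bf_def by (simp add: sum_subtractf algebra_simps)

lemma bf_diff_right [simp]: "bf G z (x - y) = bf G z x - bf G z y"
  unfolding bf_def by (simp add: sum_subtractf algebra_simps)

lemma bf_minus_left [simp]: "bf G (- x) z = - bf G x z"
  unfolding bf_def by (simp add: sum_negf)

lemma bf_minus_right [simp]: "bf G z (- x) = - bf G z x"
  unfolding bf_def by (simp add: sum_negf)

lemma to_real_add: "to_real (x + y) = to_real x + to_real y"
  unfolding to_real_def by (simp add: vec_eq_iff)

lemma to_real_uminus: "to_real (- x) = - to_real x"
  unfolding to_real_def by (simp add: vec_eq_iff)

lemma to_real_eq_0_iff [simp]: "to_real x = 0 \<longleftrightarrow> x = 0"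
  unfolding to_real_def by (simp add: vec_eq_iff)

lemma of_int_bf: "of_int (bf G x y) = rbf G (to_real x) (to_real y)"
  unfolding rbf_def bf_def to_real_def by simp

lemma transpose_eq_self_nth: "transpose G = G \<Longrightarrow> G$i$j = G$j$i"
  by (metis transpose_def vec_lambda_beta)

lemma rbf_commute: "transpose G = G \<Longrightarrow> rbf G x y = rbf G y x"
  unfolding rbf_def by (subst sum.swap) (simp add: algebra_simps transpose_eq_self_nth[of G])

lemma bf_commute: "transpose G = G \<Longrightarrow> bf G x y = bf G y x"
  using rbf_commute[of G "to_real x" "to_real y"] by (simp flip: of_int_bf)

lemma rbf_eq_inner: "rbf G x y = x \<bullet> ((\<chi> i j. of_int (G$i$j)) *v y)"
  unfolding rbf_def inner_vec_def matrix_vector_mult_def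
  by (simp add: sum_distrib_left algebra_simps)

lemma rbf_nondegenerate:
  fixes G :: "int^'n^'n"
  assumes "det G \<noteq> 0" and "x \<noteq> 0"
  shows "\<exists>y. rbf G y x \<noteq> 0"
proof -
  define M :: "real^'n^'n" where "M = (\<chi> i j. of_int (G$i$j))"
  have "det M = of_int (det G)"
    unfolding det_def M_def by simp
  then have "invertible M" using assms(1) by (simp add: invertible_det_nz)
  then have "M *v x \<noteq> 0"
    using assms(2) matrix_left_invertible_ker invertible_def by blast
  then have "rbf G (M *v x) x \<noteq> 0" unfolding rbf_eq_inner M_def by simp
  then show ?thesis by blast
qed

lemma ex_linear_plus_square_pos:
  fixes a b :: real
  assumes "a \<noteq> 0"
  shows "\<exists>t. 2 * t * a + t\<^sup>2 * b > 0"
proof -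
  define k where "k = \<bar>b\<bar> + 1"
  have k: "k > 0" "b / k > -1"
    unfolding k_def by (auto simp: field_simps)
  have "2 * (a / k) * a + (a / k)\<^sup>2 * b = (a * a / k) * (2 + b / k)"
    using k by (simp add: power2_eq_square field_simps)
  also have "\<dots> > 0"
  proof (rule mult_pos_pos)
    show "a * a / k > 0" using assms k(1) by (metis divide_pos_pos not_real_square_gt_zero)
  qed (use k(2) in linarith)
  finally show ?thesis by blast
qed

lemma rbf_square_combination:
  "rbf G (a *\<^sub>R x + b *\<^sub>R y) (a *\<^sub>R x + b *\<^sub>R y)
     = a * a * rbf G x x + a * b * (rbf G x y + rbf G y x) + b * b * rbf G y y"
  by (simp add: algebra_simps)

context
  fixes G :: "int^'n^'n"
  assumes symmetric: "transpose G = G" and hyperbolic: "hyperbolic G"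
begin

lemma hyperbolic_orthogonal_nonpos:
  assumes HH: "rbf G H H > 0" and wH: "rbf G w H = 0"
  shows "rbf G w w \<le> 0"
proof (rule ccontr)
  assume "\<not> rbf G w w \<le> 0"
  then have ww: "rbf G w w > 0" by simp
  have "rbf G (a *\<^sub>R H + b *\<^sub>R w) (a *\<^sub>R H + b *\<^sub>R w) > 0"
    if "a \<noteq> 0 \<or> b \<noteq> 0" for a b
  proof -
    have "a * a * rbf G H H > 0 \<or> b * b * rbf G w w > 0"
      using that HH ww by (metis mult_pos_pos not_real_square_gt_zero)
    moreover have "a * a * rbf G H H \<ge> 0" "b * b * rbf G w w \<ge> 0"
      using HH ww by auto
    ultimately show ?thesis
      unfolding rbf_square_combination using wH rbf_commute[OF symmetric, of w H] by auto
  qed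
  then show False using hyperbolic unfolding hyperbolic_def by blast
qed

lemma hyperbolic_orthogonal_neg:
  assumes HH: "rbf G H H > 0" and xH: "rbf G x H = 0" and "x \<noteq> 0"
  shows "rbf G x x < 0"
proof (rule ccontr)
  assume "\<not> rbf G x x < 0"
  then have xx: "rbf G x x = 0" using hyperbolic_orthogonal_nonpos[OF HH xH] by simp
  have "det G \<noteq> 0" using hyperbolic unfolding hyperbolic_def by simp
  then obtain y where y: "rbf G x y \<noteq> 0"
    using rbf_nondegenerate \<open>x \<noteq> 0\<close> rbf_commute[OF symmetric] by metis
  \<comment> \<open>Project y to the orthogonal complement of H; a suitable step from the isotropic x
    along the projection gives a positive vector orthogonal to H.\<close>
  define z where "z = y - (rbf G y H / rbf G H H) *\<^sub>R H"
  have zH: "rbf G z H = 0" unfolding z_def using HH by simp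
  have xz: "rbf G x z \<noteq> 0"
    unfolding z_def using y xH rbf_commute[OF symmetric, of x H] by simp
  obtain t where t: "2 * t * rbf G x z + t\<^sup>2 * rbf G z z > 0"
    using ex_linear_plus_square_pos[OF xz] by blast
  have "rbf G (1 *\<^sub>R x + t *\<^sub>R z) (1 *\<^sub>R x + t *\<^sub>R z) = 2 * t * rbf G x z + t\<^sup>2 * rbf G z z"
    unfolding rbf_square_combination using xx rbf_commute[OF symmetric, of z x]
    by (simp add: power2_eq_square)
  moreover have "rbf G (1 *\<^sub>R x + t *\<^sub>R z) H = 0" using xH zH by simp
  ultimately show False using t hyperbolic_orthogonal_nonpos[OF HH] by fastforce
qed

lemma hyperbolic_reverse_Cauchy_Schwarz:
  assumes HH: "rbf G H H > 0"
  shows "rbf G H H * rbf G x x \<le> (rbf G x H)\<^sup>2"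
proof -
  define u where "u = rbf G H H *\<^sub>R x + (- rbf G x H) *\<^sub>R H"
  have "rbf G u H = 0" unfolding u_def by (simp add: algebra_simps)
  then have "rbf G u u \<le> 0" by (rule hyperbolic_orthogonal_nonpos[OF HH])
  moreover have "rbf G u u = rbf G H H * (rbf G H H * rbf G x x - (rbf G x H)\<^sup>2)"
    unfolding u_def rbf_square_combination using rbf_commute[OF symmetric, of H x]
    by (simp add: power2_eq_square algebra_simps)
  ultimately show ?thesis using HH by (simp add: mult_le_0_iff)
qed

end


lemma polarizedD:
  assumes "polarized G h"
  shows "transpose G = G" and "hyperbolic G" and "bf G h h > 0"
    and "rbf G (to_real h) (to_real h) > 0"
  using assms unfolding polarized_def even_lattice_def
  by (auto simp: transpose_def vec_eq_iff simp flip: of_int_bf)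

lemma polarized_bf_commute: "polarized G h \<Longrightarrow> bf G x y = bf G y x"
  using bf_commute polarizedD(1) by blast

lemma polarized_bf_square_add:
  "polarized G h \<Longrightarrow> bf G (x + y) (x + y) = bf G x x + 2 * bf G x y + bf G y y"
  using polarized_bf_commute[of G h y x] by simp

lemma polarized_bf_square_diff:
  "polarized G h \<Longrightarrow> bf G (x - y) (x - y) = bf G x x - 2 * bf G x y + bf G y y"
  using polarized_bf_commute[of G h y x] by simp

lemma polarized_orthogonal_neg:
  assumes P: "polarized G h" and "bf G x h = 0" and "x \<noteq> 0"
  shows "bf G x x < 0"
proof -
  have "rbf G (to_real x) (to_real h) = 0" using assms(2) by (simp flip: of_int_bf)
  then have "rbf G (to_real x) (to_real x) < 0"
    using hyperbolic_orthogonal_neg[OF polarizedD(1,2,4)[OF P]] assms(3) by simp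
  then show ?thesis by (simp flip: of_int_bf)
qed

lemma polarized_reverse_Cauchy_Schwarz:
  assumes P: "polarized G h"
  shows "bf G h h * bf G x x \<le> (bf G x h)\<^sup>2"
proof -
  have "rbf G (to_real h) (to_real h) * rbf G (to_real x) (to_real x)
          \<le> (rbf G (to_real x) (to_real h))\<^sup>2"
    by (rule hyperbolic_reverse_Cauchy_Schwarz[OF polarizedD(1,2,4)[OF P]])
  then have "of_int (bf G h h * bf G x x) \<le> (of_int ((bf G x h)\<^sup>2) :: real)"
    by (simp add: of_int_bf)
  then show ?thesis by linarith
qed

lemma positive_homogeneous_quadratic_coercive:
  fixes Q :: "'a::euclidean_space \<Rightarrow> real"
  assumes "continuous_on UNIV Q" and pos: "\<And>x. x \<noteq> 0 \<Longrightarrow> Q x > 0"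
    and hom: "\<And>c x. Q (c *\<^sub>R x) = c\<^sup>2 * Q x"
  obtains c where "c > 0" and "\<And>x. c * (norm x)\<^sup>2 \<le> Q x"
proof -
  obtain x0 where x0: "x0 \<in> sphere 0 1" and min: "\<And>y. y \<in> sphere 0 1 \<Longrightarrow> Q x0 \<le> Q y"
    using continuous_attains_inf[OF compact_sphere _ continuous_on_subset[OF assms(1)]]
    by (metis sphere_eq_empty not_one_less_zero subset_UNIV)
  have "Q x0 * (norm x)\<^sup>2 \<le> Q x" for x
  proof (cases "x = 0")
    case True
    then show ?thesis using hom[of 0 x] by simp
  next
    case False
    then have "Q x0 \<le> Q ((1 / norm x) *\<^sub>R x)" by (intro min) simp
    also have "\<dots> = Q x / (norm x)\<^sup>2" by (simp add: hom power_divide)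
    finally show ?thesis using False by (simp add: field_simps)
  qed
  moreover have "Q x0 > 0" using x0 pos[of x0] by fastforce
  ultimately show ?thesis using that by blast
qed

lemma finite_int_vectors_bounded: "finite {x :: int^'n. \<forall>i. \<bar>x$i\<bar> \<le> N}"
proof (rule finite_subset)
  show "{x :: int^'n. \<forall>i. \<bar>x$i\<bar> \<le> N} \<subseteq> vec_lambda ` (\<Pi>\<^sub>E i\<in>UNIV. {-N..N})"
  proof
    fix x :: "int^'n"
    assume "x \<in> {x. \<forall>i. \<bar>x$i\<bar> \<le> N}"
    then have "(\<lambda>i. x$i) \<in> (\<Pi>\<^sub>E i\<in>UNIV. {-N..N})" by (auto simp: abs_le_iff minus_le_iff)
    then show "x \<in> vec_lambda ` (\<Pi>\<^sub>E i\<in>UNIV. {-N..N})" by (metis image_eqI vec_nth_inverse)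
  qed
qed (intro finite_imageI finite_PiE; simp)

lemma finite_root0:
  fixes G :: "int^'n^'n"
  assumes P: "polarized G h"
  shows "finite (root G h 0)"
proof -
  define H where "H = to_real h"
  have HH: "rbf G H H > 0" using polarizedD(4)[OF P] unfolding H_def .
  note hyp = polarizedD(1,2)[OF P]
  \<comment> \<open>Q is the form with the sign of its negative definite part reversed.\<close>
  define Q where "Q x = 2 * (rbf G x H)\<^sup>2 / rbf G H H - rbf G x x" for x
  have "Q x > 0" if "x \<noteq> 0" for x
  proof (cases "rbf G x H = 0")
    case True
    then show ?thesis using hyperbolic_orthogonal_neg[OF hyp HH _ that] unfolding Q_def by simp
  next
    case False
    have "rbf G x x \<le> (rbf G x H)\<^sup>2 / rbf G H H"
      using hyperbolic_reverse_Cauchy_Schwarz[OF hyp HH, of x] HH by (simp add: field_simps)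
    moreover have "(rbf G x H)\<^sup>2 / rbf G H H > 0" using False HH by simp
    ultimately show ?thesis unfolding Q_def by simp
  qed
  moreover have "Q (c *\<^sub>R x) = c\<^sup>2 * Q x" for c x
    unfolding Q_def by (simp add: power2_eq_square field_simps)
  moreover have "continuous_on UNIV Q"
  proof -
    have "continuous_on UNIV (\<lambda>x. rbf G x H)" "continuous_on UNIV (\<lambda>x. rbf G x x)"
      unfolding rbf_def by (intro continuous_intros)+
    then show ?thesis unfolding Q_def using HH by (intro continuous_intros) auto
  qed
  ultimately obtain c where c: "c > 0" and Q_ge: "\<And>x. c * (norm x)\<^sup>2 \<le> Q x"
    using positive_homogeneous_quadratic_coercive by blast
  have "root G h 0 \<subseteq> {x. \<forall>i. \<bar>x$i\<bar> \<le> \<lceil>sqrt (2 / c)\<rceil>}"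
  proof (intro subsetI CollectI allI)
    fix r i
    assume "r \<in> root G h 0"
    then have "Q (to_real r) = 2" unfolding Q_def H_def root_def by (simp flip: of_int_bf)
    then have "(norm (to_real r))\<^sup>2 \<le> 2 / c" using Q_ge[of "to_real r"] c by (simp add: field_simps)
    then have "norm (to_real r) \<le> sqrt (2 / c)" by (rule real_le_rsqrt)
    moreover have "\<bar>of_int (r$i)\<bar> \<le> norm (to_real r)"
      using component_le_norm_cart[of "to_real r" i] unfolding to_real_def by simp
    ultimately show "\<bar>r$i\<bar> \<le> \<lceil>sqrt (2 / c)\<rceil>" by linarith
  qed
  then show ?thesis using finite_int_vectors_bounded finite_subset by blast
qed


lemma uminus_in_root: "r \<in> root G h n \<Longrightarrow> - r \<in> root G h (- n)"
  unfolding root_def by simp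

lemma weyl_chamber_nonempty:
  assumes "weyl_chamber G h \<Delta>"
  shows "\<Delta> \<noteq> {}"
proof -
  obtain v where "v \<in> span (to_real ` root G h 0)" "\<forall>r\<in>root G h 0. rbf G v (to_real r) \<noteq> 0"
    and "\<Delta> = {x \<in> span (to_real ` root G h 0).
                 \<forall>r\<in>root G h 0. rbf G x (to_real r) * rbf G v (to_real r) > 0}"
    using assms unfolding weyl_chamber_def by blast
  then have "v \<in> \<Delta>" by (auto simp: zero_less_mult_iff linorder_neq_iff)
  then show ?thesis by blast
qed

lemma root0_pos_or_neg:
  assumes W: "weyl_chamber G h \<Delta>" and r: "r \<in> root G h 0"
  shows "r \<in> pos_roots G h \<Delta> \<or> - r \<in> pos_roots G h \<Delta>"
proof -
  obtain v where v: "\<forall>r\<in>root G h 0. rbf G v (to_real r) \<noteq> 0"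
    and \<Delta>: "\<Delta> = {x \<in> span (to_real ` root G h 0).
                 \<forall>r\<in>root G h 0. rbf G x (to_real r) * rbf G v (to_real r) > 0}"
    using W unfolding weyl_chamber_def by blast
  consider "rbf G v (to_real r) > 0" | "rbf G v (to_real r) < 0" using v r by fastforce
  then show ?thesis
  proof cases
    case 1
    then have "r \<in> pos_roots G h \<Delta>"
      using r unfolding \<Delta> pos_roots_def by (auto simp: zero_less_mult_iff)
    then show ?thesis ..
  next
    case 2
    then have "- r \<in> pos_roots G h \<Delta>"
      using r uminus_in_root[OF r] unfolding \<Delta> pos_roots_def
      by (auto simp: zero_less_mult_iff to_real_uminus)
    then show ?thesis ..
  qed
qed

lemma pos_roots_uminus:
  assumes "weyl_chamber G h \<Delta>" and "r \<in> pos_roots G h \<Delta>"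
  shows "- r \<notin> pos_roots G h \<Delta>"
proof
  assume "- r \<in> pos_roots G h \<Delta>"
  obtain x where "x \<in> \<Delta>" using weyl_chamber_nonempty[OF assms(1)] by blast
  then have "rbf G x (to_real r) > 0" and "rbf G x (to_real (- r)) > 0"
    using assms(2) \<open>- r \<in> pos_roots G h \<Delta>\<close> unfolding pos_roots_def by auto
  then show False by (simp add: to_real_uminus)
qed

(* A positive root on which l is negative and whose height against a vector of the chamber is
   minimal cannot be simple, and splitting it gives a counterexample of smaller height. *)
lemma pos_roots_bf_nonneg:
  fixes G :: "int^'n^'n"
  assumes P: "polarized G h" and W: "weyl_chamber G h \<Delta>"
    and simple_nonneg: "\<forall>e\<in>simple_roots G h \<Delta>. bf G l e \<ge> 0"
    and r: "r \<in> pos_roots G h \<Delta>"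
  shows "bf G l r \<ge> 0"
proof (rule ccontr)
  assume "\<not> bf G l r \<ge> 0"
  obtain v where v: "v \<in> \<Delta>" using weyl_chamber_nonempty[OF W] by blast
  define height where "height s = rbf G v (to_real s)" for s
  have height_pos: "height s > 0" if "s \<in> pos_roots G h \<Delta>" for s
    using that v unfolding height_def pos_roots_def by auto
  define A where "A = {s \<in> pos_roots G h \<Delta>. bf G l s < 0}"
  have "finite A"
    using finite_root0[OF P] unfolding A_def pos_roots_def by (rule rev_finite_subset) auto
  moreover have "A \<noteq> {}" using r \<open>\<not> bf G l r \<ge> 0\<close> unfolding A_def by auto
  ultimately obtain r0 where r0: "r0 \<in> A" and min: "\<And>s. s \<in> A \<Longrightarrow> \<not> height s < height r0"
    using ex_is_arg_min_if_finite[of A height] unfolding is_arg_min_def by blast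
  have "r0 \<notin> simple_roots G h \<Delta>" using r0 simple_nonneg unfolding A_def by force
  then obtain a b where ab: "a \<in> pos_roots G h \<Delta>" "b \<in> pos_roots G h \<Delta>" "r0 = a + b"
    using r0 unfolding A_def simple_roots_def by blast
  then have "height r0 = height a + height b" unfolding height_def by (simp add: to_real_add)
  moreover have "a \<in> A \<or> b \<in> A" using r0 ab unfolding A_def by auto
  ultimately show False using min height_pos ab by force
qed

lemma lines_bf_pos_roots_nonneg:
  fixes G :: "int^'n^'n"
  assumes "polarized G h" and "weyl_chamber G h \<Delta>"
    and "l \<in> lines G h \<Delta>" and "r \<in> pos_roots G h \<Delta>"
  shows "bf G l r \<ge> 0"
  using pos_roots_bf_nonneg assms unfolding lines_def by blast


lemma bf_ge_neg1_if_same_degree: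
  assumes P: "polarized G h" and "bf G x x = -2" and "bf G y y = -2"
    and "bf G x h = bf G y h" and "x \<noteq> y"
  shows "bf G x y \<ge> -1"
proof -
  have "bf G (x - y) (x - y) < 0"
    using polarized_orthogonal_neg[OF P, of "x - y"] assms(4,5) by simp
  then show ?thesis using assms(2,3) polarized_bf_square_diff[OF P] by simp
qed

lemma diff_in_root0_if_bf_neg1:
  assumes P: "polarized G h" and "bf G x x = -2" and "bf G y y = -2"
    and "bf G x h = bf G y h" and "bf G x y = -1"
  shows "x - y \<in> root G h 0"
  using assms polarized_bf_square_diff[OF P] unfolding root_def by simp

lemma bf_le_1_if_sum_not_isotropic:
  assumes P: "polarized G h" and "bf G x x = -2" and "bf G y y = -2"
    and small_degree: "(bf G (x + y) h)\<^sup>2 < 2 * bf G h h"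
    and not_isotropic: "\<not> isotropic G h (bf G (x + y) h) (x + y)"
  shows "bf G x y \<le> 1"
proof -
  have square: "bf G (x + y) (x + y) = 2 * bf G x y - 4"
    using assms(2,3) polarized_bf_square_add[OF P] by simp
  have "bf G x y \<noteq> 2" using not_isotropic square unfolding isotropic_def by auto
  moreover have "\<not> bf G x y \<ge> 3"
  proof
    assume "bf G x y \<ge> 3"
    then have "2 * bf G h h \<le> bf G h h * bf G (x + y) (x + y)"
      using square polarizedD(3)[OF P] by (simp add: mult_left_mono)
    then show False
      using polarized_reverse_Cauchy_Schwarz[OF P, of "x + y"] small_degree by simp
  qed
  ultimately show ?thesis by linarith
qed

lemma simple_roots_bf:
  assumes P: "polarized G h" and W: "weyl_chamber G h \<Delta>"
    and e1: "e1 \<in> simple_roots G h \<Delta>" and e2: "e2 \<in> simple_roots G h \<Delta>" and "e1 \<noteq> e2"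
  shows "bf G e1 e2 \<in> {0, 1}"
proof -
  have pos: "e1 \<in> pos_roots G h \<Delta>" "e2 \<in> pos_roots G h \<Delta>"
    using e1 e2 unfolding simple_roots_def by auto
  then have roots: "bf G e1 e1 = -2" "bf G e2 e2 = -2" "bf G e1 h = 0" "bf G e2 h = 0"
    unfolding pos_roots_def root_def by auto
  have "e2 \<noteq> - e1" using pos_roots_uminus[OF W pos(1)] pos(2) by blast
  then have "bf G (e1 + e2) (e1 + e2) < 0"
    using polarized_orthogonal_neg[OF P, of "e1 + e2"] roots by (simp add: add_eq_0_iff)
  then have "bf G e1 e2 \<le> 1" using roots polarized_bf_square_add[OF P] by simp
  moreover have "bf G e1 e2 \<noteq> -1"
  proof
    assume "bf G e1 e2 = -1"
    then have "e1 - e2 \<in> root G h 0" using diff_in_root0_if_bf_neg1[OF P] roots by simp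
    then have "e1 - e2 \<in> pos_roots G h \<Delta> \<or> e2 - e1 \<in> pos_roots G h \<Delta>"
      using root0_pos_or_neg[OF W] by force
    moreover have "e1 = (e1 - e2) + e2" "e2 = (e2 - e1) + e1" by simp_all
    ultimately show False using pos e1 e2 unfolding simple_roots_def by blast
  qed
  moreover have "bf G e1 e2 \<ge> -1"
    using bf_ge_neg1_if_same_degree[OF P] roots \<open>e1 \<noteq> e2\<close> by simp
  ultimately show ?thesis by auto
qed

lemma line_simple_root_bf:
  assumes P: "polarized G h" and A: "admissible1 G h"
    and l: "l \<in> lines G h \<Delta>" and e: "e \<in> simple_roots G h \<Delta>"
  shows "bf G l e \<in> {0, 1}"
proof -
  have roots: "bf G l l = -2" "bf G e e = -2" "bf G (l + e) h = 1"
    using l e unfolding lines_def simple_roots_def pos_roots_def root_def by auto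
  have "bf G l e \<le> 1"
  proof (rule bf_le_1_if_sum_not_isotropic[OF P roots(1,2)])
    show "(bf G (l + e) h)\<^sup>2 < 2 * bf G h h" using roots polarizedD(3)[OF P] by simp
    show "\<not> isotropic G h (bf G (l + e) h) (l + e)" using A roots unfolding admissible1_def by simp
  qed
  moreover have "bf G l e \<ge> 0" using l e unfolding lines_def by blast
  ultimately show ?thesis by auto
qed

lemma lines_bf:
  assumes P: "polarized G h" and W: "weyl_chamber G h \<Delta>" and A: "admissible2 G h"
    and l1: "l1 \<in> lines G h \<Delta>" and l2: "l2 \<in> lines G h \<Delta>" and "l1 \<noteq> l2"
  shows "bf G l1 l2 \<in> {0, 1}"
proof -
  have roots: "bf G l1 l1 = -2" "bf G l2 l2 = -2" "bf G l1 h = 1" "bf G l2 h = 1"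
    using l1 l2 unfolding lines_def root_def by auto
  have "bf G l1 l2 \<le> 1"
  proof (rule bf_le_1_if_sum_not_isotropic[OF P roots(1,2)])
    show "(bf G (l1 + l2) h)\<^sup>2 < 2 * bf G h h" using roots A unfolding admissible2_def by simp
    show "\<not> isotropic G h (bf G (l1 + l2) h) (l1 + l2)"
      using A roots unfolding admissible2_def by simp
  qed
  moreover have "bf G l1 l2 \<noteq> -1"
  proof
    assume "bf G l1 l2 = -1"
    then have "l1 - l2 \<in> root G h 0" using diff_in_root0_if_bf_neg1[OF P] roots by simp
    then have "l1 - l2 \<in> pos_roots G h \<Delta> \<or> l2 - l1 \<in> pos_roots G h \<Delta>"
      using root0_pos_or_neg[OF W] by fastforce
    moreover have "bf G l1 (l1 - l2) = -1" "bf G l2 (l2 - l1) = -1"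
      using roots \<open>bf G l1 l2 = -1\<close> polarized_bf_commute[OF P, of l2 l1] by simp_all
    ultimately show False
      using lines_bf_pos_roots_nonneg[OF P W] l1 l2 by fastforce
  qed
  moreover have "bf G l1 l2 \<ge> -1"
    using bf_ge_neg1_if_same_degree[OF P] roots \<open>l1 \<noteq> l2\<close> by simp
  ultimately show ?thesis by auto
qed

theorem lemma2p12:
  fixes G :: "int^'n^'n" and h e1 e2 l1 l2 :: "int^'n" and \<Delta> :: "(real^'n) set"
  assumes "polarized G h"
    and "weyl_chamber G h \<Delta>"
    and "e1 \<in> simple_roots G h \<Delta>" and "e2 \<in> simple_roots G h \<Delta>" and "e1 \<noteq> e2"
    and "l1 \<in> lines G h \<Delta>" and "l2 \<in> lines G h \<Delta>" and "l1 \<noteq> l2"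
  shows "(admissible2 G h \<longrightarrow> bf G l1 l2 \<in> {0, 1})
       \<and> (admissible1 G h \<longrightarrow> bf G l1 e1 \<in> {0, 1})
       \<and> bf G e1 e2 \<in> {0, 1}"
  using lines_bf line_simple_root_bf simple_roots_bf assms by blast

end
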